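(* Let $H\ge1$, and for $h=1,\dots,H$ let $\boldsymbol{P}^h\in\mathbb{R}^{n\times n}$, $\boldsymbol{A}^h=\mathrm{softmax}(\boldsymbol{P}^h)$, and $\boldsymbol{W}_V^h,\boldsymbol{W}_O^h\in\mathbb{R}^{d\times d}$. Let $\alpha=\max_h\max_{i,j}\lvert\boldsymbol{P}^h_{ij}\rvert$, $\sigma_1=\max_h\lVert\boldsymbol{W}_V^h\rVert_2$, $\sigma_2=\max_h\lVert\boldsymbol{W}_O^h\rVert_2$. For $\boldsymbol{X}\in\mathbb{R}^{n\times d}$ define $\mathrm{MSA}(\boldsymbol{X})=\sum_{h=1}^H\boldsymbol{A}^h\boldsymbol{X}\boldsymbol{W}_V^h\boldsymbol{W}_O^h$. Then $$\lVert\mathrm{HC}[\mathrm{MSA}(\boldsymbol{X})]\rVert_F\le\sigma_1\sigma_2H\sqrt{\frac{ne^{2\alpha}}{e^{2\alpha}+n-1}}\;\lVert\mathrm{HC}[\boldsymbol{X}]\rVert_F.$$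
   Context: $\mathrm{softmax}$ is applied row-wise: $\mathrm{softmax}(\boldsymbol{P})_{ij}=e^{\boldsymbol{P}_{ij}}/\sum_t e^{\boldsymbol{P}_{it}}$. For $\boldsymbol{X}\in\mathbb{R}^{n\times d}$, $\mathrm{HC}[\boldsymbol{X}]=(\boldsymbol{I}-\frac1n\boldsymbol{1}\boldsymbol{1}^T)\boldsymbol{X}$ with $\boldsymbol{1}$ the all-ones vector. $\lVert\cdot\rVert_F$ is the Frobenius norm, $\lVert\cdot\rVert_2$ the spectral norm. *)

theory Defs
  imports "HOL-Analysis.Analysis"
begin

text \<open>Matrices are rendered as \<open>real^'c^'r\<close> (rows indexed by \<open>'r\<close>, columns by \<open>'c\<close>).\<close>

definition softmax :: "real^'m^'n \<Rightarrow> real^'m^'n" where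
  "softmax P = (\<chi> i j. exp (P $ i $ j) / (\<Sum>t\<in>UNIV. exp (P $ i $ t)))"

definition all_ones :: "real^'n" where
  "all_ones = (\<chi> i. 1)"

definition HC :: "real^'d^'n \<Rightarrow> real^'d^'n" where
  "HC X = (mat 1 - (1 / real CARD('n)) *\<^sub>R (\<chi> i j. (all_ones :: real^'n) $ i * (all_ones :: real^'n) $ j)) ** X"

definition frob_norm :: "real^'c^'r \<Rightarrow> real" where
  "frob_norm X = sqrt (\<Sum>i\<in>UNIV. \<Sum>j\<in>UNIV. (X $ i $ j)\<^sup>2)"

definition spec_norm :: "real^'c^'r \<Rightarrow> real" where
  "spec_norm W = onorm (\<lambda>x. W *v x)"

definition MSA :: "nat \<Rightarrow> (nat \<Rightarrow> real^'n^'n) \<Rightarrow> (nat \<Rightarrow> real^'d^'d) \<Rightarrow> (nat \<Rightarrow> real^'d^'d)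
                   \<Rightarrow> real^'d^'n \<Rightarrow> real^'d^'n" where
  "MSA H P WV WO X = (\<Sum>h\<in>{1..H}. softmax (P h) ** X ** WV h ** WO h)"

end

theory Submission
  imports Defs
begin

text \<open>Every row of a softmax matrix \<open>A\<close> is a probability vector, so \<open>A\<close> maps column-constant
  matrices to column-constant matrices and \<open>HC (A ** X) = HC (A ** HC X)\<close>; centring itself is a
  contraction. By Jensen's inequality row by row, \<open>\<parallel>A Z\<parallel>\<^sub>F\<^sup>2\<close> is at most the largest column sum
  of \<open>A\<close> times \<open>\<parallel>Z\<parallel>\<^sub>F\<^sup>2\<close>. Since all scores lie in \<open>[-\<alpha>, \<alpha>]\<close>, each softmax entry is at most
  \<open>e\<^sup>2\<^sup>\<alpha> / (e\<^sup>2\<^sup>\<alpha> + n - 1)\<close>, so column sums are at most \<open>n e\<^sup>2\<^sup>\<alpha> / (e\<^sup>2\<^sup>\<alpha> + n - 1)\<close>.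
  Centring commutes with right multiplication by \<open>W\<^sub>V W\<^sub>O\<close>, which costs at most \<open>\<sigma>\<^sub>1 \<sigma>\<^sub>2\<close>, and the
  triangle inequality over the \<open>H\<close> heads gives the factor \<open>H\<close>.\<close>

lemma frob_norm_eq_norm: "frob_norm (X::real^'c^'r) = norm X"
  unfolding frob_norm_def norm_vec_def L2_set_def
  by (simp add: real_sqrt_pow2 sum_nonneg)

lemma norm_matrix_power2: "(norm (X::real^'c^'r))\<^sup>2 = (\<Sum>i\<in>UNIV. \<Sum>j\<in>UNIV. (X $ i $ j)\<^sup>2)"
  unfolding frob_norm_eq_norm[symmetric] frob_norm_def
  by (simp add: sum_nonneg)

lemma spec_norm_nonneg: "0 \<le> spec_norm (W::real^'c^'r)"
  unfolding spec_norm_def by (rule onorm_pos_le) simp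

lemma norm_matrix_vector_mult_le: "norm ((W::real^'c^'r) *v x) \<le> spec_norm W * norm x"
  unfolding spec_norm_def by (rule onorm[OF matrix_vector_mul_bounded_linear])

lemma norm_vector_matrix_mult_le: "norm ((x::real^'r) v* (W::real^'c^'r)) \<le> spec_norm W * norm x"
proof -
  let ?y = "x v* W"
  have "(norm ?y)\<^sup>2 = inner x (W *v ?y)"
    by (simp add: power2_norm_eq_inner dot_lmul_matrix)
  also have "\<dots> \<le> norm x * norm (W *v ?y)" by (rule norm_cauchy_schwarz)
  also have "\<dots> \<le> norm x * (spec_norm W * norm ?y)"
    by (intro mult_left_mono norm_matrix_vector_mult_le) simp
  finally have "norm ?y * norm ?y \<le> (spec_norm W * norm x) * norm ?y"
    by (simp add: power2_eq_square ac_simps)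
  then show ?thesis
    using spec_norm_nonneg[of W] by (cases "norm ?y = 0") auto
qed

lemma norm_matrix_mult_le: "norm ((Y::real^'r^'n) ** (W::real^'c^'r)) \<le> spec_norm W * norm Y"
proof -
  have row: "(Y ** W) $ i = (Y $ i) v* W" for i
    by (simp add: matrix_matrix_mult_def vector_matrix_mult_def vec_eq_iff mult.commute)
  have "norm (Y ** W) = L2_set (\<lambda>i. norm ((Y $ i) v* W)) UNIV"
    unfolding norm_vec_def row by simp
  also have "\<dots> \<le> L2_set (\<lambda>i. spec_norm W * norm (Y $ i)) UNIV"
    by (rule L2_set_mono) (auto intro: norm_vector_matrix_mult_le)
  also have "\<dots> = spec_norm W * norm Y"
    unfolding norm_vec_def using spec_norm_nonneg[of W] by (simp add: L2_set_right_distrib)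
  finally show ?thesis .
qed

lemma HC_nth: "HC (Y::real^'d^'n) $ i $ k = Y $ i $ k - (\<Sum>j\<in>UNIV. Y $ j $ k) / real CARD('n)"
proof -
  have "HC Y $ i $ k = (\<Sum>j\<in>UNIV. (if i = j then Y $ j $ k else 0) - Y $ j $ k / real CARD('n))"
    unfolding HC_def matrix_matrix_mult_def mat_def all_ones_def
    by (auto intro!: sum.cong simp: algebra_simps divide_inverse)
  then show ?thesis
    by (simp add: sum_subtractf sum_divide_distrib)
qed

lemma HC_sum: "finite S \<Longrightarrow> HC (\<Sum>h\<in>S. f h) = (\<Sum>h\<in>S. HC (f h :: real^'d^'n))"
  by (induction S rule: finite_induct) (simp_all add: HC_def matrix_add_ldistrib)

lemma HC_matrix_mult: "HC ((Y::real^'d^'n) ** (W::real^'e^'d)) = HC Y ** W"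
  unfolding HC_def by (simp add: matrix_mul_assoc)

lemma HC_add_column_constant:
  assumes "\<And>i k. Z $ i $ k = Y $ i $ k + c k"
  shows "HC (Z::real^'d^'n) = HC Y"
proof -
  have "(\<Sum>j\<in>UNIV. Z $ j $ k) / real CARD('n) = (\<Sum>j\<in>UNIV. Y $ j $ k) / real CARD('n) + c k" for k
    using assms by (simp add: sum.distrib add_divide_distrib)
  then show ?thesis
    by (simp add: vec_eq_iff HC_nth assms)
qed

lemma sum_power2_deviation_mean_le:
  fixes y :: "'a \<Rightarrow> real"
  assumes "finite I"
  shows "(\<Sum>i\<in>I. (y i - sum y I / card I)\<^sup>2) \<le> (\<Sum>i\<in>I. (y i)\<^sup>2)"
proof -
  define m where "m = sum y I / card I"
  have "(\<Sum>i\<in>I. (y i - m)\<^sup>2) = (\<Sum>i\<in>I. (y i)\<^sup>2) - 2 * m * sum y I + card I * m\<^sup>2"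
    by (simp add: power2_diff sum.distrib sum_subtractf sum_distrib_left[symmetric]
        sum_distrib_right[symmetric] algebra_simps)
  also have "\<dots> = (\<Sum>i\<in>I. (y i)\<^sup>2) - card I * m\<^sup>2"
    by (cases "card I = 0") (simp_all add: m_def power2_eq_square field_simps)
  finally show ?thesis
    unfolding m_def[symmetric] by simp
qed

lemma norm_HC_le: "norm (HC (Y::real^'d^'n)) \<le> norm Y"
proof (rule power2_le_imp_le[OF _ norm_ge_zero])
  have "(norm (HC Y))\<^sup>2 = (\<Sum>k\<in>UNIV. \<Sum>i\<in>UNIV. (Y $ i $ k - (\<Sum>j\<in>UNIV. Y $ j $ k) / real CARD('n))\<^sup>2)"
    unfolding norm_matrix_power2 HC_nth by (rule sum.swap)
  also have "\<dots> \<le> (\<Sum>k\<in>UNIV. \<Sum>i\<in>UNIV. (Y $ i $ k)\<^sup>2)"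
    by (rule sum_mono, rule sum_power2_deviation_mean_le[OF finite_class.finite_UNIV])
  also have "\<dots> = (norm Y)\<^sup>2"
    unfolding norm_matrix_power2 by (rule sum.swap)
  finally show "(norm (HC Y))\<^sup>2 \<le> (norm Y)\<^sup>2" .
qed

text \<open>A row-stochastic \<open>A\<close> sends the column means of \<open>X\<close> to constant columns, which \<open>HC\<close> discards.\<close>

lemma HC_matrix_mult_HC:
  assumes "\<And>i. (\<Sum>j\<in>UNIV. A $ i $ j) = 1"
  shows "HC ((A::real^'n^'n) ** HC (X::real^'d^'n)) = HC (A ** X)"
proof (rule HC_add_column_constant)
  fix i k
  show "(A ** HC X) $ i $ k = (A ** X) $ i $ k + - ((\<Sum>j\<in>UNIV. X $ j $ k) / real CARD('n))"
    using assms[of i]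
    by (simp add: matrix_matrix_mult_def HC_nth right_diff_distrib sum_subtractf
        sum_divide_distrib[symmetric] sum_distrib_right[symmetric])
qed

lemma weighted_mean_power2_le:
  fixes a z :: "'a \<Rightarrow> real"
  assumes "\<And>j. j \<in> I \<Longrightarrow> 0 \<le> a j" "sum a I = 1"
  shows "(\<Sum>j\<in>I. a j * z j)\<^sup>2 \<le> (\<Sum>j\<in>I. a j * (z j)\<^sup>2)"
proof -
  have "(\<Sum>j\<in>I. a j * z j)\<^sup>2 = (\<Sum>j\<in>I. sqrt (a j) * (sqrt (a j) * z j))\<^sup>2"
    using assms(1) by (simp add: mult.assoc[symmetric])
  also have "\<dots> \<le> (\<Sum>j\<in>I. (sqrt (a j))\<^sup>2) * (\<Sum>j\<in>I. (sqrt (a j) * z j)\<^sup>2)"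
    by (rule Cauchy_Schwarz_ineq_sum)
  also have "\<dots> = (\<Sum>j\<in>I. a j * (z j)\<^sup>2)"
    using assms by (simp add: power_mult_distrib)
  finally show ?thesis .
qed

lemma norm_stochastic_matrix_mult_power2_le:
  assumes "\<And>i j. 0 \<le> A $ i $ j" "\<And>i. (\<Sum>j\<in>UNIV. A $ i $ j) = 1"
    and "\<And>j. (\<Sum>i\<in>UNIV. A $ i $ j) \<le> c"
  shows "(norm ((A::real^'m^'n) ** (Z::real^'d^'m)))\<^sup>2 \<le> c * (norm Z)\<^sup>2"
proof -
  have "(norm (A ** Z))\<^sup>2 = (\<Sum>i\<in>UNIV. \<Sum>k\<in>UNIV. (\<Sum>j\<in>UNIV. A $ i $ j * Z $ j $ k)\<^sup>2)"
    unfolding norm_matrix_power2 by (simp add: matrix_matrix_mult_def)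
  also have "\<dots> \<le> (\<Sum>i\<in>UNIV. \<Sum>k\<in>UNIV. \<Sum>j\<in>UNIV. A $ i $ j * (Z $ j $ k)\<^sup>2)"
    using assms(1,2) by (intro sum_mono weighted_mean_power2_le) auto
  also have "\<dots> = (\<Sum>k\<in>UNIV. \<Sum>j\<in>UNIV. \<Sum>i\<in>UNIV. A $ i $ j * (Z $ j $ k)\<^sup>2)"
    by (subst sum.swap) (intro sum.cong refl sum.swap)
  also have "\<dots> = (\<Sum>j\<in>UNIV. (\<Sum>i\<in>UNIV. A $ i $ j) * (\<Sum>k\<in>UNIV. (Z $ j $ k)\<^sup>2))"
    by (subst sum.swap) (simp only: sum_distrib_left sum_distrib_right)
  also have "\<dots> \<le> (\<Sum>j\<in>UNIV. c * (\<Sum>k\<in>UNIV. (Z $ j $ k)\<^sup>2))"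
    by (intro sum_mono mult_right_mono assms(3) sum_nonneg) simp
  also have "\<dots> = c * (norm Z)\<^sup>2"
    unfolding norm_matrix_power2 by (simp add: sum_distrib_left)
  finally show ?thesis .
qed

lemma softmax_nonneg: "0 \<le> softmax (P::real^'m^'n) $ i $ j"
  unfolding softmax_def by (simp add: sum_nonneg)

lemma sum_softmax_row: "(\<Sum>j\<in>UNIV. softmax (P::real^'m^'n) $ i $ j) = 1"
proof -
  have "(\<Sum>t\<in>UNIV. exp (P $ i $ t)) > 0" by (intro sum_pos) auto
  then show ?thesis unfolding softmax_def by (simp add: sum_divide_distrib[symmetric])
qed

text \<open>Every competitor \<open>t \<noteq> j\<close> has \<open>e\<^sup>P\<^sup>i\<^sup>t \<ge> e\<^sup>-\<^sup>2\<^sup>\<alpha> e\<^sup>P\<^sup>i\<^sup>j\<close>, so the denominator is at least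
  \<open>(1 + (m - 1) e\<^sup>-\<^sup>2\<^sup>\<alpha>) e\<^sup>P\<^sup>i\<^sup>j\<close>.\<close>

lemma softmax_le:
  assumes "\<And>i j. \<bar>P $ i $ j\<bar> \<le> \<alpha>"
  shows "softmax (P::real^'m^'n) $ i $ j \<le> exp (2 * \<alpha>) / (exp (2 * \<alpha>) + real CARD('m) - 1)"
proof -
  define x where "x = exp (P $ i $ j)"
  define q where "q = 1 + (real CARD('m) - 1) * exp (- 2 * \<alpha>)"
  have x: "0 < x" unfolding x_def by simp
  have q: "1 \<le> q"
    unfolding q_def by (simp add: Suc_le_eq)
  have "exp (- 2 * \<alpha>) * x \<le> exp (P $ i $ t)" for t
    unfolding x_def mult_exp_exp using assms[of i t] assms[of i j] by simp
  then have "(\<Sum>t\<in>UNIV - {j}. exp (- 2 * \<alpha>) * x) \<le> (\<Sum>t\<in>UNIV - {j}. exp (P $ i $ t))"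
    by (rule sum_mono)
  then have denominator: "q * x \<le> (\<Sum>t\<in>UNIV. exp (P $ i $ t))"
    by (simp add: sum.remove[of UNIV j] card_Diff_singleton of_nat_diff q_def x_def
        algebra_simps Suc_le_eq)
  have "softmax P $ i $ j = x / (\<Sum>t\<in>UNIV. exp (P $ i $ t))"
    unfolding softmax_def x_def by simp
  also have "\<dots> \<le> x / (q * x)"
    using denominator x q
    by (intro divide_left_mono mult_pos_pos) (auto intro: less_le_trans[of 0 "q * x"])
  also have "\<dots> = 1 / q"
    using x by simp
  also have "\<dots> = exp (2 * \<alpha>) / (exp (2 * \<alpha>) + real CARD('m) - 1)"
    unfolding q_def by (simp add: exp_minus field_simps)
  finally show ?thesis .
qed

lemma norm_HC_softmax_mult_le:
  assumes "\<And>i j. \<bar>P $ i $ j\<bar> \<le> \<alpha>"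
  shows "norm (HC (softmax (P::real^'n^'n) ** (X::real^'d^'n)))
     \<le> sqrt (real CARD('n) * exp (2 * \<alpha>) / (exp (2 * \<alpha>) + real CARD('n) - 1)) * norm (HC X)"
proof -
  define c where "c = real CARD('n) * exp (2 * \<alpha>) / (exp (2 * \<alpha>) + real CARD('n) - 1)"
  have column_sum: "(\<Sum>i\<in>UNIV. softmax P $ i $ j) \<le> c" for j
    using sum_mono[of UNIV "\<lambda>i. softmax P $ i $ j", OF softmax_le[OF assms]]
    by (simp add: c_def)
  have "norm (HC (softmax P ** X)) = norm (HC (softmax P ** HC X))"
    by (simp add: HC_matrix_mult_HC sum_softmax_row)
  also have "\<dots> \<le> norm (softmax P ** HC X)"
    by (rule norm_HC_le)
  also have "\<dots> \<le> sqrt (c * (norm (HC X))\<^sup>2)"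
    by (rule real_le_rsqrt norm_stochastic_matrix_mult_power2_le softmax_nonneg sum_softmax_row
        column_sum)+
  also have "\<dots> = sqrt c * norm (HC X)"
    by (simp add: real_sqrt_mult)
  finally show ?thesis
    unfolding c_def .
qed

lemma norm_HC_attention_head_le:
  assumes "\<And>i j. \<bar>P $ i $ j\<bar> \<le> \<alpha>" "spec_norm WV \<le> \<sigma>\<^sub>1" "spec_norm WO \<le> \<sigma>\<^sub>2"
  shows "norm (HC (softmax (P::real^'n^'n) ** (X::real^'d^'n) ** (WV::real^'d^'d)
      ** (WO::real^'d^'d)))
     \<le> \<sigma>\<^sub>1 * \<sigma>\<^sub>2 * sqrt (real CARD('n) * exp (2 * \<alpha>) / (exp (2 * \<alpha>) + real CARD('n) - 1))
       * norm (HC X)"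
proof -
  let ?c = "sqrt (real CARD('n) * exp (2 * \<alpha>) / (exp (2 * \<alpha>) + real CARD('n) - 1))"
  have "norm (HC (softmax P ** X ** WV ** WO))
      \<le> spec_norm WO * (spec_norm WV * norm (HC (softmax P ** X)))"
    unfolding HC_matrix_mult
    by (rule order_trans[OF norm_matrix_mult_le
          mult_left_mono[OF norm_matrix_mult_le spec_norm_nonneg]])
  also have "\<dots> \<le> \<sigma>\<^sub>2 * (\<sigma>\<^sub>1 * (?c * norm (HC X)))"
    using assms spec_norm_nonneg[of WV] spec_norm_nonneg[of WO]
    by (intro mult_mono norm_HC_softmax_mult_le) (auto simp: Suc_le_eq add_nonneg_pos)
  finally show ?thesis
    by (simp add: ac_simps)
qed

theorem proposition4:
  fixes H :: nat
    and P :: "nat \<Rightarrow> real^'n^'n"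
    and WV WO :: "nat \<Rightarrow> real^'d^'d"
    and X :: "real^'d^'n"
    and \<alpha> \<sigma>\<^sub>1 \<sigma>\<^sub>2 :: real
  assumes "H \<ge> 1"
    and "\<alpha> = Max {\<bar>P h $ i $ j\<bar> | h i j. h \<in> {1..H}}"
    and "\<sigma>\<^sub>1 = Max {spec_norm (WV h) | h. h \<in> {1..H}}"
    and "\<sigma>\<^sub>2 = Max {spec_norm (WO h) | h. h \<in> {1..H}}"
  shows "frob_norm (HC (MSA H P WV WO X))
           \<le> \<sigma>\<^sub>1 * \<sigma>\<^sub>2 * real H
             * sqrt (real CARD('n) * exp (2 * \<alpha>) / (exp (2 * \<alpha>) + real CARD('n) - 1))
             * frob_norm (HC X)"
proof -
  define c where "c = sqrt (real CARD('n) * exp (2 * \<alpha>) / (exp (2 * \<alpha>) + real CARD('n) - 1))"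
  have "{\<bar>P h $ i $ j\<bar> | h i j. h \<in> {1..H}}
      = (\<lambda>(h, i, j). \<bar>P h $ i $ j\<bar>) ` ({1..H} \<times> UNIV \<times> UNIV)"
    by (auto simp: image_iff; force)
  then have "finite {\<bar>P h $ i $ j\<bar> | h i j. h \<in> {1..H}}"
    by simp
  then have "\<bar>P h $ i $ j\<bar> \<le> \<alpha>" if "h \<in> {1..H}" for h i j
    using assms(2) that by (auto intro!: Max_ge)
  moreover have "spec_norm (WV h) \<le> \<sigma>\<^sub>1" "spec_norm (WO h) \<le> \<sigma>\<^sub>2" if "h \<in> {1..H}" for h
    using assms(3,4) that by (auto intro!: Max_ge)
  ultimately have head:
    "norm (HC (softmax (P h) ** X ** WV h ** WO h)) \<le> \<sigma>\<^sub>1 * \<sigma>\<^sub>2 * c * norm (HC X)"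
    if "h \<in> {1..H}" for h
    unfolding c_def using that by (intro norm_HC_attention_head_le) auto
  have "norm (HC (MSA H P WV WO X))
      \<le> (\<Sum>h\<in>{1..H}. norm (HC (softmax (P h) ** X ** WV h ** WO h)))"
    unfolding MSA_def HC_sum[OF finite_atLeastAtMost] by (rule norm_sum)
  also have "\<dots> \<le> (\<Sum>h\<in>{1..H}. \<sigma>\<^sub>1 * \<sigma>\<^sub>2 * c * norm (HC X))"
    by (rule sum_mono) (rule head)
  finally show ?thesis
    unfolding frob_norm_eq_norm c_def by (simp add: ac_simps)
qed

end
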